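(* Let $N\ge 2$ and let $\theta_1,\dots,\theta_N\in\mathbb R$. Consider the $N$-qubit state $|e_{\theta_1}\rangle\otimes\cdots\otimes|e_{\theta_N}\rangle$, where $|e_\theta\rangle=(|0\rangle+e^{i\theta}|1\rangle)/\sqrt2$. Apply, for each $j=2,\dots,N$, a CNOT gate with qubit $1$ as control and qubit $j$ as target, and then measure each qubit $j=2,\dots,N$ in the computational basis, obtaining outcomes $m_j\in\{0,1\}$. Then the outcomes $m_2,\dots,m_N$ are independent and uniformly distributed, and conditional on them the first qubit is left (up to a global phase) in the state $|e_{\theta_{\rm tot}}\rangle$ with $\theta_{\rm tot}=\theta_1+\sum_{j=2}^N(-1)^{m_j}\theta_j$. In particular, if $\theta_1=\cdots=\theta_N=\theta$ and exactly $k$ of the outcomes equal $0$, the first qubit is left in $|e_{(2k+2-N)\theta}\rangle$, which occurs with probability $2^{-(N-1)}\binom{N-1}{k}$, and the average quantum Fisher information about $\theta$ of the resulting single-qubit state, $\sum_{k=0}^{N-1}2^{-(N-1)}\binom{N-1}{k}(2k+2-N)^2$, equals $N$, the quantum Fisher information of $|e_\theta\rangle^{\otimes N}$.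
   Context: The CNOT gate acts as $|a\rangle|b\rangle\mapsto|a\rangle|a\oplus b\rangle$ for $a,b\in\{0,1\}$. For a differentiable family of pure states $|\phi_\theta\rangle$, the quantum Fisher information is $F(|\phi_\theta\rangle)=4\left(\langle\partial_\theta\phi_\theta|\partial_\theta\phi_\theta\rangle-|\langle\phi_\theta|\partial_\theta\phi_\theta\rangle|^2\right)$; for $|e_{c\theta}\rangle$ it equals $c^2$. *)

theory Defs
  imports "HOL-Analysis.Analysis"
begin

text \<open>Computational basis states of an n-qubit register are bit lists of length n
  (False = |0>, True = |1>); list index 0 is qubit 1, index j is qubit j+1.
  A state is its amplitude function.\<close>

definition ket_e :: "real \<Rightarrow> bool \<Rightarrow> complex" where
  "ket_e \<theta> b = (if b then cis \<theta> else 1) / complex_of_real (sqrt 2)"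

definition prod_state :: "nat \<Rightarrow> (nat \<Rightarrow> real) \<Rightarrow> bool list \<Rightarrow> complex" where
  "prod_state N th xs = (if length xs = N then (\<Prod>j<N. ket_e (th j) (xs ! j)) else 0)"

text \<open>CNOT with control c and target t: |..a..b..> maps to |..a..(a xor b)..>;
  the amplitude of the image at basis xs is the old amplitude at xs with target bit flipped
  iff control bit is set.\<close>
definition cnot :: "nat \<Rightarrow> nat \<Rightarrow> (bool list \<Rightarrow> complex) \<Rightarrow> bool list \<Rightarrow> complex" where
  "cnot c t \<psi> = (\<lambda>xs. \<psi> (xs[t := (xs ! t \<noteq> xs ! c)]))"

definition cnot_cascade :: "nat \<Rightarrow> (bool list \<Rightarrow> complex) \<Rightarrow> bool list \<Rightarrow> complex" where
  "cnot_cascade N \<psi> = fold (\<lambda>j \<phi>. cnot 0 j \<phi>) [1..<N] \<psi>"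

definition outcome_prob :: "(bool list \<Rightarrow> complex) \<Rightarrow> bool list \<Rightarrow> real" where
  "outcome_prob \<psi> m = (\<Sum>a\<in>UNIV. (cmod (\<psi> (a # m)))\<^sup>2)"

definition post_state :: "(bool list \<Rightarrow> complex) \<Rightarrow> bool list \<Rightarrow> bool \<Rightarrow> complex" where
  "post_state \<psi> m a = \<psi> (a # m) / complex_of_real (sqrt (outcome_prob \<psi> m))"

text \<open>theta_tot = theta_1 + sum_{j=2}^N (-1)^{m_j} theta_j; m ! (j-1) is the outcome of qubit j+1.\<close>
definition theta_tot :: "nat \<Rightarrow> (nat \<Rightarrow> real) \<Rightarrow> bool list \<Rightarrow> real" where
  "theta_tot N th m = th 0 + (\<Sum>j\<in>{1..<N}. (if m ! (j - 1) then -1 else 1) * th j)"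

definition qfi :: "(real \<Rightarrow> 'b \<Rightarrow> complex) \<Rightarrow> 'b set \<Rightarrow> real \<Rightarrow> real" where
  "qfi \<phi> S \<theta> = 4 * ((\<Sum>b\<in>S. (cmod (vector_derivative (\<lambda>t. \<phi> t b) (at \<theta>)))\<^sup>2)
      - (cmod (\<Sum>b\<in>S. cnj (\<phi> \<theta> b) * vector_derivative (\<lambda>t. \<phi> t b) (at \<theta>)))\<^sup>2)"

definition num_zeros :: "bool list \<Rightarrow> nat" where
  "num_zeros m = length (filter Not m)"

end

theory Submission
  imports Defs
begin

text \<open>After the CNOT cascade the amplitude at (a, m) is the product-state amplitude at
  (a, m xor a), i.e. 2^(-N/2) cis (a th_1 + sum_j [m_j xor a] th_j). Splitting off the
  a-independent phase sum_(m_j = 1) th_j leaves cis (a theta_tot): every outcome string has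
  probability 2^(1-N) and leaves the first qubit in e_(theta_tot). For equal angles
  theta_tot = (1 + S) th, where S = sum_j (-1)^(m_j) is a sum of N - 1 independent uniform
  signs, so E S = 0 and E S^2 = N - 1; the averaged Fisher information is E (1 + S)^2 = N.
  A family with amplitudes of constant modulus and phases rho_b t has Fisher information
  4 Var rho; for e_th^(x N) the phase at a basis string is (N - S)/2 with S over all N bits,
  giving Var S = N.\<close>

lemma prod_cis: "(\<Prod>j\<in>A. cis (f j)) = cis (\<Sum>j\<in>A. f j)"
  by (induction A rule: infinite_finite_induct) (simp_all add: cis_mult)

lemma vector_derivative_cis_linear:
  "c \<noteq> 0 \<Longrightarrow> vector_derivative (\<lambda>t. cis (r * t) / c) (at x) = \<i> * of_real r * cis (r * x) / c"
proof (rule vector_derivative_at)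
  assume "c \<noteq> 0"
  then show "((\<lambda>t. cis (r * t) / c) has_vector_derivative \<i> * of_real r * cis (r * x) / c) (at x)"
    unfolding has_vector_derivative_def
    by (auto intro!: derivative_eq_intros simp: fun_eq_iff scaleR_conv_of_real field_simps)
qed

lemma finite_lists_length: "finite {xs :: 'a :: finite list. length xs = n}"
  using finite_lists_length_eq[of "UNIV :: 'a set" n] by simp

lemma card_lists_length: "card {xs :: 'a :: finite list. length xs = n} = CARD('a) ^ n"
  using card_lists_length_eq[of "UNIV :: 'a set" n] by simp

lemma sum_lists_length_Suc:
  "(\<Sum>xs | length xs = Suc n. f xs) = (\<Sum>xs | length xs = n. f (False # xs) + f (True # xs))"
proof -
  let ?L = "{xs :: bool list. length xs = n}"
  have "{xs. length xs = Suc n} = Cons False ` ?L \<union> Cons True ` ?L"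
    by (auto simp: length_Suc_conv)
  then have "(\<Sum>xs | length xs = Suc n. f xs) = (\<Sum>xs \<in> Cons False ` ?L \<union> Cons True ` ?L. f xs)"
    by (simp only:)
  also have "\<dots> = (\<Sum>xs \<in> Cons False ` ?L. f xs) + (\<Sum>xs \<in> Cons True ` ?L. f xs)"
    by (rule sum.union_disjoint) (auto simp: finite_lists_length)
  finally show ?thesis
    by (simp add: sum.reindex sum.distrib)
qed

lemma card_eq_sum_indicator:
  "finite A \<Longrightarrow> card {x \<in> A. P x} = (\<Sum>x\<in>A. if P x then 1 else 0)"
  using sum.inter_filter[of A "\<lambda>_. 1 :: nat" P] by simp

lemma card_lists_num_zeros: "card {m. length m = n \<and> num_zeros m = k} = n choose k"
proof (induction n arbitrary: k)
  case 0
  have "{m. length m = 0 \<and> num_zeros m = k} = (if k = 0 then {[]} else {})"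
    by (auto simp: num_zeros_def)
  then show ?case by simp
next
  case (Suc n)
  have card_eq_sum: "card {m. length m = l \<and> num_zeros m = j} = (\<Sum>m | length m = l. if num_zeros m = j then 1 else 0)"
    for l j using card_eq_sum_indicator[OF finite_lists_length, of l "\<lambda>m. num_zeros m = j"]
    by simp
  have "card {m. length m = Suc n \<and> num_zeros m = k}
      = (\<Sum>m | length m = n. (if Suc (num_zeros m) = k then 1 else 0) + (if num_zeros m = k then 1 else 0))"
    unfolding card_eq_sum sum_lists_length_Suc by (simp add: num_zeros_def)
  also have "\<dots> = (if k = 0 then 0 else n choose (k - 1)) + (n choose k)"
    unfolding sum.distrib Suc.IH[symmetric] card_eq_sum by (cases k) simp_all
  also have "\<dots> = Suc n choose k"
    by (cases k) simp_all
  finally show ?case .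
qed

lemma sum_lists_num_zeros:
  "(\<Sum>m | length m = n. f (num_zeros m)) = (\<Sum>k\<le>n. of_nat (n choose k) * f k)"
proof -
  have "(\<Sum>m | length m = n. f (num_zeros m))
      = (\<Sum>k\<le>n. \<Sum>m \<in> {m \<in> {m. length m = n}. num_zeros m = k}. f (num_zeros m))"
    by (rule sum.group[symmetric]) (auto simp: finite_lists_length num_zeros_def)
  also have "\<dots> = (\<Sum>k\<le>n. \<Sum>m | length m = n \<and> num_zeros m = k. f k)"
    by (intro sum.cong) auto
  also have "\<dots> = (\<Sum>k\<le>n. of_nat (n choose k) * f k)"
    by (simp add: card_lists_num_zeros)
  finally show ?thesis .
qed

definition spin :: "bool list \<Rightarrow> real" where
  "spin m = (\<Sum>b\<leftarrow>m. if b then -1 else 1)"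

lemma spin_eq_num_zeros: "spin m = 2 * real (num_zeros m) - real (length m)"
  by (induction m) (auto simp: spin_def num_zeros_def)

lemma spin_eq_sum_nth: "spin m = (\<Sum>j<length m. if m ! j then -1 else 1)"
  by (simp add: spin_def sum_list_sum_nth atLeast0LessThan)

lemma sum_spin: "(\<Sum>m | length m = n. spin m) = 0"
  by (induction n) (simp_all add: sum_lists_length_Suc spin_def sum.distrib sum_distrib_left[symmetric])

lemma sum_spin_square: "(\<Sum>m | length m = n. (spin m)\<^sup>2) = real n * 2 ^ n"
proof (induction n)
  case 0
  show ?case by (simp add: spin_def)
next
  case (Suc n)
  have "(\<Sum>m | length m = Suc n. (spin m)\<^sup>2) = (\<Sum>m | length m = n. 2 * (spin m)\<^sup>2 + 2)"
    unfolding sum_lists_length_Suc by (simp add: spin_def power2_eq_square algebra_simps)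
  also have "\<dots> = 2 * (real n * 2 ^ n) + 2 * 2 ^ n"
    by (simp add: sum.distrib sum_distrib_left[symmetric] Suc.IH card_lists_length)
  finally show ?case by (simp add: algebra_simps)
qed

lemma sum_affine_spin: "(\<Sum>m | length m = n. c + d * spin m) = 2 ^ n * c"
  by (simp add: sum.distrib sum_distrib_left[symmetric] sum_spin card_lists_length)

lemma sum_affine_spin_square:
  "(\<Sum>m | length m = n. (c + d * spin m)\<^sup>2) = 2 ^ n * (c\<^sup>2 + d\<^sup>2 * real n)"
proof -
  have "(\<Sum>m | length m = n. (c + d * spin m)\<^sup>2)
      = (\<Sum>m | length m = n. c\<^sup>2 + 2 * c * d * spin m + d\<^sup>2 * (spin m)\<^sup>2)"
    by (simp add: power2_eq_square algebra_simps)
  also have "\<dots> = 2 ^ n * c\<^sup>2 + 2 * c * d * (\<Sum>m | length m = n. spin m)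
      + d\<^sup>2 * (\<Sum>m | length m = n. (spin m)\<^sup>2)"
    by (simp add: sum.distrib sum_distrib_left card_lists_length)
  also have "\<dots> = 2 ^ n * (c\<^sup>2 + d\<^sup>2 * real n)"
    by (simp add: sum_spin sum_spin_square algebra_simps)
  finally show ?thesis .
qed

lemma binomial_spin_second_moment:
  "(\<Sum>k\<le>n. real (n choose k) / 2 ^ n * (real (2 * k + 2) - real (Suc n))\<^sup>2) = real (Suc n)"
proof -
  have "(\<Sum>k\<le>n. real (n choose k) * (real (2 * k + 2) - real (Suc n))\<^sup>2)
      = (\<Sum>m | length m = n. (1 + spin m)\<^sup>2)"
    by (simp add: sum_lists_num_zeros[symmetric] spin_eq_num_zeros algebra_simps)
  also have "\<dots> = 2 ^ n * real (Suc n)"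
    using sum_affine_spin_square[of 1 1 n] by simp
  finally show ?thesis
    by (simp add: sum_divide_distrib[symmetric] mult.commute[of _ "(_ :: real)\<^sup>2"])
qed

lemma fold_cnot_Cons:
  "fold (\<lambda>j \<phi>. cnot 0 j \<phi>) [1..<Suc k] \<psi> (a # m) = \<psi> (a # map (\<lambda>b. b \<noteq> a) (take k m) @ drop k m)"
proof (induction k arbitrary: m)
  case 0
  show ?case by simp
next
  case (Suc k)
  have "fold (\<lambda>j \<phi>. cnot 0 j \<phi>) [1..<Suc (Suc k)] \<psi> (a # m)
      = fold (\<lambda>j \<phi>. cnot 0 j \<phi>) [1..<Suc k] \<psi> (a # m[k := (m ! k \<noteq> a)])"
    by (simp add: cnot_def)
  also have "\<dots> = \<psi> (a # map (\<lambda>b. b \<noteq> a) (take (Suc k) m) @ drop (Suc k) m)"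
    unfolding Suc.IH
    by (cases "k < length m") (simp_all add: take_Suc_conv_app_nth upd_conv_take_nth_drop list_update_beyond)
  finally show ?case .
qed

lemma cnot_cascade_Cons:
  "length m = n \<Longrightarrow> cnot_cascade (Suc n) \<psi> (a # m) = \<psi> (a # map (\<lambda>b. b \<noteq> a) m)"
  unfolding cnot_cascade_def fold_cnot_Cons by simp

lemma ket_e_eq_cis: "ket_e x b = cis (if b then x else 0) / complex_of_real (sqrt 2)"
  by (simp add: ket_e_def)

lemma norm_ket_e: "cmod (ket_e x b) = 1 / sqrt 2"
  by (simp add: ket_e_def norm_divide)

definition global_phase :: "(nat \<Rightarrow> real) \<Rightarrow> bool list \<Rightarrow> real" where
  "global_phase th m = (\<Sum>j<length m. if m ! j then th (Suc j) else 0)"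

lemma theta_tot_Suc:
  "theta_tot (Suc n) th m = th 0 + (\<Sum>j<n. (if m ! j then -1 else 1) * th (Suc j))"
  unfolding theta_tot_def One_nat_def sum.shift_bounds_Suc_ivl by (simp add: atLeast0LessThan)

lemma cascade_product_amplitude:
  assumes "length m = n"
  shows "cnot_cascade (Suc n) (prod_state (Suc n) th) (a # m)
     = cis (global_phase th m) * ket_e (theta_tot (Suc n) th m) a / complex_of_real (sqrt 2 ^ n)"
proof -
  have "cnot_cascade (Suc n) (prod_state (Suc n) th) (a # m)
      = ket_e (th 0) a * (\<Prod>j<n. ket_e (th (Suc j)) (m ! j \<noteq> a))"
    using assms by (simp only: cnot_cascade_Cons prod_state_def prod.lessThan_Suc_shift) simp
  also have "\<dots> = cis ((if a then th 0 else 0) + (\<Sum>j<n. if m ! j \<noteq> a then th (Suc j) else 0))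
      / complex_of_real (sqrt 2 ^ Suc n)"
    by (simp add: ket_e_eq_cis prod_dividef prod_cis cis_mult)
  also have "(if a then th 0 else 0) + (\<Sum>j<n. if m ! j \<noteq> a then th (Suc j) else 0)
      = global_phase th m + (if a then theta_tot (Suc n) th m else 0)"
    using assms by (cases a) (auto simp: global_phase_def theta_tot_Suc sum.distrib[symmetric] intro!: sum.cong)
  finally show ?thesis
    by (simp add: ket_e_eq_cis cis_mult)
qed

lemma outcome_prob_cascade_product:
  assumes "length m = n"
  shows "outcome_prob (cnot_cascade (Suc n) (prod_state (Suc n) th)) m = 1 / 2 ^ n"
proof -
  have "(cmod (cnot_cascade (Suc n) (prod_state (Suc n) th) (a # m)))\<^sup>2 = 1 / 2 / 2 ^ n" for a
  proof -
    have "(sqrt 2 ^ n)\<^sup>2 = (2 :: real) ^ n"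
      by (simp add: power2_eq_square flip: power_mult_distrib)
    then show ?thesis
      using assms by (simp add: cascade_product_amplitude norm_mult norm_divide norm_ket_e norm_power
          power_divide power_mult_distrib)
  qed
  then show ?thesis by (simp add: outcome_prob_def UNIV_bool)
qed

lemma post_state_cascade_product:
  assumes "length m = n"
  shows "post_state (cnot_cascade (Suc n) (prod_state (Suc n) th)) m
    = (\<lambda>a. cis (global_phase th m) * ket_e (theta_tot (Suc n) th m) a)"
proof
  fix a
  show "post_state (cnot_cascade (Suc n) (prod_state (Suc n) th)) m a
      = cis (global_phase th m) * ket_e (theta_tot (Suc n) th m) a"
    using assms by (simp add: post_state_def outcome_prob_cascade_product cascade_product_amplitude
        real_sqrt_divide real_sqrt_power)
qed

lemma sum_outcome_prob_num_zeros:
  "(\<Sum>m | length m = n \<and> num_zeros m = k. outcome_prob (cnot_cascade (Suc n) (prod_state (Suc n) th)) m)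
    = real (n choose k) / 2 ^ n"
proof -
  have "(\<Sum>m | length m = n \<and> num_zeros m = k. outcome_prob (cnot_cascade (Suc n) (prod_state (Suc n) th)) m)
      = (\<Sum>m | length m = n \<and> num_zeros m = k. 1 / 2 ^ n)"
    by (rule sum.cong) (simp_all add: outcome_prob_cascade_product)
  then show ?thesis
    by (simp add: card_lists_num_zeros)
qed

lemma theta_tot_uniform:
  assumes "length m = n"
  shows "theta_tot (Suc n) (\<lambda>_. \<theta>) m = (real (2 * num_zeros m + 2) - real (Suc n)) * \<theta>"
proof -
  have "theta_tot (Suc n) (\<lambda>_. \<theta>) m = (1 + spin m) * \<theta>"
    using assms by (simp add: theta_tot_Suc spin_eq_sum_nth sum_distrib_left algebra_simps)
  then show ?thesis
    using assms by (simp add: spin_eq_num_zeros algebra_simps)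
qed

lemma qfi_phase_family:
  assumes "finite S" "s \<noteq> 0"
    and phase: "\<And>b t. b \<in> S \<Longrightarrow> \<phi> t b = cis (\<rho> b * t) / complex_of_real s"
  shows "qfi \<phi> S \<theta> = 4 * ((\<Sum>b\<in>S. (\<rho> b)\<^sup>2) / s\<^sup>2 - ((\<Sum>b\<in>S. \<rho> b) / s\<^sup>2)\<^sup>2)"
proof -
  have deriv: "vector_derivative (\<lambda>t. \<phi> t b) (at \<theta>) = \<i> * of_real (\<rho> b) * cis (\<rho> b * \<theta>) / of_real s"
    if "b \<in> S" for b
    using phase[OF that] assms(2) by (simp add: vector_derivative_cis_linear)
  have norms: "(\<Sum>b\<in>S. (cmod (vector_derivative (\<lambda>t. \<phi> t b) (at \<theta>)))\<^sup>2) = (\<Sum>b\<in>S. (\<rho> b)\<^sup>2) / s\<^sup>2"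
    by (simp add: deriv norm_mult norm_divide power_divide sum_divide_distrib)
  have overlap: "(\<Sum>b\<in>S. cnj (\<phi> \<theta> b) * vector_derivative (\<lambda>t. \<phi> t b) (at \<theta>))
      = \<i> * of_real ((\<Sum>b\<in>S. \<rho> b) / s\<^sup>2)"
  proof -
    have "cnj (\<phi> \<theta> b) * vector_derivative (\<lambda>t. \<phi> t b) (at \<theta>) = \<i> * of_real (\<rho> b / s\<^sup>2)"
      if "b \<in> S" for b
    proof -
      have "cnj (\<phi> \<theta> b) * vector_derivative (\<lambda>t. \<phi> t b) (at \<theta>)
          = \<i> * of_real (\<rho> b) * (cis (- (\<rho> b * \<theta>)) * cis (\<rho> b * \<theta>)) / (of_real s * of_real s)"
        by (simp only: deriv[OF that]) (simp add: phase[OF that] cis_cnj)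
      then show ?thesis
        using assms(2) by (simp add: cis_mult power2_eq_square)
    qed
    then show ?thesis
      by (simp add: sum_distrib_left sum_divide_distrib)
  qed
  show ?thesis
    unfolding qfi_def norms overlap norm_mult norm_ii norm_of_real by (simp add: power_divide)
qed

lemma qfi_ket_e_linear: "qfi (\<lambda>t. ket_e (r * t)) UNIV \<theta> = r\<^sup>2"
proof -
  have "qfi (\<lambda>t. ket_e (r * t)) UNIV \<theta>
      = 4 * ((\<Sum>b\<in>UNIV. (if b then r else 0)\<^sup>2) / (sqrt 2)\<^sup>2
          - ((\<Sum>b\<in>UNIV. if b then r else 0) / (sqrt 2)\<^sup>2)\<^sup>2)"
    by (rule qfi_phase_family) (auto simp: ket_e_def)
  also have "\<dots> = r\<^sup>2"
    by (simp add: UNIV_bool power2_eq_square field_simps)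
  finally show ?thesis .
qed

lemma prod_state_uniform:
  assumes "length xs = N"
  shows "prod_state N (\<lambda>_. t) xs = cis ((real N - spin xs) / 2 * t) / complex_of_real (sqrt 2 ^ N)"
proof -
  have ones: "(\<Sum>b\<leftarrow>xs. if b then t else 0) = (real (length xs) - spin xs) / 2 * t" for xs
    by (induction xs) (auto simp: spin_def field_simps)
  have phase: "(\<Sum>j<N. if xs ! j then t else 0) = (real N - spin xs) / 2 * t"
    using ones[of xs] assms by (simp add: sum_list_sum_nth atLeast0LessThan)
  show ?thesis
    by (simp add: prod_state_def assms ket_e_eq_cis prod_dividef prod_cis phase)
qed

lemma qfi_prod_state_uniform: "qfi (\<lambda>t. prod_state N (\<lambda>_. t)) {xs. length xs = N} \<theta> = real N"
proof -
  let ?\<rho> = "\<lambda>xs. real N / 2 + (- 1 / 2) * spin xs"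
  have "qfi (\<lambda>t. prod_state N (\<lambda>_. t)) {xs. length xs = N} \<theta>
      = 4 * ((\<Sum>xs | length xs = N. (?\<rho> xs)\<^sup>2) / (sqrt 2 ^ N)\<^sup>2
          - ((\<Sum>xs | length xs = N. ?\<rho> xs) / (sqrt 2 ^ N)\<^sup>2)\<^sup>2)"
    by (rule qfi_phase_family) (auto simp: finite_lists_length prod_state_uniform field_simps)
  also have "\<dots> = real N"
    unfolding sum_affine_spin sum_affine_spin_square
    by (simp add: power2_eq_square field_simps flip: power_mult_distrib)
  finally show ?thesis .
qed

theorem mainTheorem2:
  fixes N :: nat and th :: "nat \<Rightarrow> real" and \<theta> :: real
  assumes "N \<ge> 2"
  shows
    "(\<forall>m. length m = N - 1 \<longrightarrow>
        outcome_prob (cnot_cascade N (prod_state N th)) m = 1 / 2 ^ (N - 1) \<and>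
        (\<exists>c. cmod c = 1 \<and>
           post_state (cnot_cascade N (prod_state N th)) m = (\<lambda>a. c * ket_e (theta_tot N th m) a)))
   \<and> (\<forall>k\<le>N - 1.
        (\<Sum>m\<in>{m. length m = N - 1 \<and> num_zeros m = k}.
            outcome_prob (cnot_cascade N (prod_state N (\<lambda>_. \<theta>))) m)
          = real (N - 1 choose k) / 2 ^ (N - 1)
        \<and> (\<forall>m. length m = N - 1 \<and> num_zeros m = k \<longrightarrow>
             (\<exists>c. cmod c = 1 \<and>
                post_state (cnot_cascade N (prod_state N (\<lambda>_. \<theta>))) m
                  = (\<lambda>a. c * ket_e ((real (2 * k + 2) - real N) * \<theta>) a))))
   \<and> (\<Sum>k\<le>N - 1. real (N - 1 choose k) / 2 ^ (N - 1) * (real (2 * k + 2) - real N)\<^sup>2) = real N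
   \<and> (\<Sum>k\<le>N - 1. real (N - 1 choose k) / 2 ^ (N - 1)
          * qfi (\<lambda>t. ket_e ((real (2 * k + 2) - real N) * t)) UNIV \<theta>) = real N
   \<and> qfi (\<lambda>t. prod_state N (\<lambda>_. t)) {xs. length xs = N} \<theta> = real N"
proof -
  obtain n where N: "N = Suc n"
    using assms by (cases N) auto
  have collapse: "\<exists>c. cmod c = 1 \<and> post_state (cnot_cascade (Suc n) (prod_state (Suc n) th')) m
      = (\<lambda>a. c * ket_e (theta_tot (Suc n) th' m) a)" if "length m = n" for th' m
    using post_state_cascade_product[OF that] by (intro exI[of _ "cis (global_phase th' m)"]) simp
  have uniform_collapse: "\<exists>c. cmod c = 1 \<and> post_state (cnot_cascade (Suc n) (prod_state (Suc n) (\<lambda>_. \<theta>))) m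
      = (\<lambda>a. c * ket_e ((real (2 * k + 2) - real (Suc n)) * \<theta>) a)"
    if "length m = n" "num_zeros m = k" for m k
    using collapse[OF that(1), of "\<lambda>_. \<theta>"] by (simp add: theta_tot_uniform[OF that(1)] that(2))
  show ?thesis
    unfolding N using outcome_prob_cascade_product collapse sum_outcome_prob_num_zeros uniform_collapse
      binomial_spin_second_moment qfi_ket_e_linear qfi_prod_state_uniform
    by simp
qed

end
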